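(* Let $a,b,g,m,n>0$ and $0<e<1$, and consider the planar system $$\dot x=a-ex-\frac{xy}{1+gy},\qquad \dot y=\frac{xy}{1+gy}-y-\frac{my}{b+ny}.$$ Let $a_1=(eg+1)n$, $a_2=(b+m)(eg+1)+n(e-a)$, and $$a_4=\frac{[en-(b-m)(eg+1)]+\sqrt{4m(eg+1)[ne-b(eg+1)]}}{n}.$$ Suppose $n>\frac{(eg+1)b^2+m(eg+1)b}{me}$ and $a=a_4$. Let $y_3=-\frac{a_2}{2a_1}$ and $x_3=\frac{a(1+gy_3)}{e+(eg+1)y_3}$, so that $E_3=(x_3,y_3)$ is an endemic equilibrium of the system. Then $E_3$ is degenerate, i.e. the determinant of the Jacobian matrix of the system at $E_3$ is zero.
   Context: The system is a rescaled SIR epidemic model with saturated infection rate and saturated treatment rate. *)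

theory Defs
  imports "HOL-Analysis.Analysis"
begin

definition sir_f1 :: "real \<Rightarrow> real \<Rightarrow> real \<Rightarrow> real \<Rightarrow> real \<Rightarrow> real" where
  "sir_f1 a e g x y = a - e * x - x * y / (1 + g * y)"

definition sir_f2 :: "real \<Rightarrow> real \<Rightarrow> real \<Rightarrow> real \<Rightarrow> real \<Rightarrow> real \<Rightarrow> real" where
  "sir_f2 b g m n x y = x * y / (1 + g * y) - y - m * y / (b + n * y)"

definition sir_jacobian ::
  "real \<Rightarrow> real \<Rightarrow> real \<Rightarrow> real \<Rightarrow> real \<Rightarrow> real \<Rightarrow> real \<Rightarrow> real \<Rightarrow> real^2^2" where
  "sir_jacobian a b e g m n x y =
     vector [vector [deriv (\<lambda>u. sir_f1 a e g u y) x, deriv (\<lambda>v. sir_f1 a e g x v) y],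
             vector [deriv (\<lambda>u. sir_f2 b g m n u y) x, deriv (\<lambda>v. sir_f2 b g m n x v) y]]"

end

theory Submission
  imports Defs
begin

text \<open>Solving the first equation for x and substituting into the second, the equilibria with
  y \<noteq> 0 are the roots of a quadratic Q(y) = a1 y^2 + a2 y + a3. At such an equilibrium the
  Jacobian determinant equals y Q'(y) / ((1 + g y)(b + n y)), so it vanishes at a double root. The value a = a4 is exactly the one that makes the discriminant
  of Q vanish, whence y3 = -a2/(2 a1) is a double root; the bound on n makes y3 positive, so all
  denominators involved are nonzero.\<close>

lemma deriv_sir_f1_x: "deriv (\<lambda>u. sir_f1 a e g u y) x = - e - y/(1 + g*y)"
proof -
  define c where "c = y/(1 + g*y)"
  have "((\<lambda>u. a - e*u - u*c) has_real_derivative - e - c) (at x)"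
    by (auto intro!: derivative_eq_intros)
  moreover have "(\<lambda>u. sir_f1 a e g u y) = (\<lambda>u. a - e*u - u*c)"
    by (simp add: sir_f1_def c_def)
  ultimately show ?thesis
    by (simp add: c_def DERIV_imp_deriv)
qed

lemma deriv_sir_f1_y:
  assumes "1 + g*y \<noteq> 0"
  shows "deriv (\<lambda>v. sir_f1 a e g x v) y = - x/(1 + g*y)^2"
  unfolding sir_f1_def
  by (rule DERIV_imp_deriv)
     (use assms in \<open>auto intro!: derivative_eq_intros simp: field_simps power2_eq_square\<close>)

lemma deriv_sir_f2_x: "deriv (\<lambda>u. sir_f2 b g m n u y) x = y/(1 + g*y)"
proof -
  define c where "c = y/(1 + g*y)"
  have "((\<lambda>u. u*c - y - m*y/(b + n*y)) has_real_derivative c) (at x)"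
    by (auto intro!: derivative_eq_intros)
  moreover have "(\<lambda>u. sir_f2 b g m n u y) = (\<lambda>u. u*c - y - m*y/(b + n*y))"
    by (simp add: sir_f2_def c_def)
  ultimately show ?thesis
    by (simp add: c_def DERIV_imp_deriv)
qed

lemma deriv_sir_f2_y:
  assumes "1 + g*y \<noteq> 0" "b + n*y \<noteq> 0"
  shows "deriv (\<lambda>v. sir_f2 b g m n x v) y = x/(1 + g*y)^2 - 1 - m*b/(b + n*y)^2"
  unfolding sir_f2_def
  by (rule DERIV_imp_deriv)
     (use assms in \<open>auto intro!: derivative_eq_intros simp: field_simps power2_eq_square\<close>)

lemma det_sir_jacobian:
  assumes "1 + g*y \<noteq> 0" "b + n*y \<noteq> 0"
  shows "det (sir_jacobian a b e g m n x y) =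
    (- e - y/(1 + g*y)) * (x/(1 + g*y)^2 - 1 - m*b/(b + n*y)^2) + x/(1 + g*y)^2 * (y/(1 + g*y))"
  using assms
  by (simp add: sir_jacobian_def det_2 deriv_sir_f1_x deriv_sir_f1_y deriv_sir_f2_x deriv_sir_f2_y)

text \<open>Eliminating x through the first equation, the equilibria with y \<noteq> 0 are the roots y
  of this quadratic, whose coefficients are the a1, a2 of the paper and e(b + m) - a b.\<close>

definition endemic_quadratic :: "real \<Rightarrow> real \<Rightarrow> real \<Rightarrow> real \<Rightarrow> real \<Rightarrow> real \<Rightarrow> real \<Rightarrow> real" where
  "endemic_quadratic a b e g m n y = (e + (e*g + 1)*y) * (b + m + n*y) - a * (b + n*y)"

lemma endemic_quadratic_expand:
  "endemic_quadratic a b e g m n y =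
     (e*g + 1)*n * y^2 + ((b + m)*(e*g + 1) + n*(e - a)) * y + (e*(b + m) - a*b)"
  by (simp add: endemic_quadratic_def power2_eq_square algebra_simps)

lemma det_sir_jacobian_at_equilibrium:
  assumes "1 + g*y \<noteq> 0" "b + n*y \<noteq> 0" "e + (e*g + 1)*y \<noteq> 0"
    and x: "x = a * (1 + g*y) / (e + (e*g + 1)*y)"
    and root: "endemic_quadratic a b e g m n y = 0"
  shows "det (sir_jacobian a b e g m n x y) =
    y * (2*((e*g + 1)*n)*y + ((b + m)*(e*g + 1) + n*(e - a))) / ((1 + g*y) * (b + n*y))"
proof -
  define k U W B where "k = e*g + 1" and "U = 1 + g*y" and "W = e + k*y" and "B = b + n*y"
  have U0: "U \<noteq> 0" and W0: "W \<noteq> 0" and B0: "B \<noteq> 0"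
    using assms(1-3) by (simp_all add: U_def W_def B_def k_def)
  have y: "y = W - e*U"
    by (simp add: W_def U_def k_def algebra_simps)
  have a: "a = W*(B + m)/B"
    using root B0 by (simp add: endemic_quadratic_def W_def B_def k_def field_simps)
  have numerator: "W*(B^2 + m*b) - e*B*(B + m) = y*(k*(B + m)*B - n*W*m)"
    by (simp add: W_def B_def) algebra
  have "det (sir_jacobian a b e g m n x y) =
      (- e - y/U) * (a/(U*W) - 1 - m*b/B^2) + a/(U*W) * (y/U)"
  proof -
    have "x/U^2 = a/(U*W)"
      using U0 W0 by (simp add: x U_def W_def k_def power2_eq_square)
    moreover have "det (sir_jacobian a b e g m n x y) =
        (- e - y/U) * (x/U^2 - 1 - m*b/B^2) + x/U^2 * (y/U)"
      unfolding U_def B_def by (rule det_sir_jacobian[OF assms(1,2)])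
    ultimately show ?thesis
      by simp
  qed
  also have "\<dots> = (W*(1 + m*b/B^2) - a*e/W)/U"
    using U0 W0 unfolding y by (simp add: field_simps power2_eq_square)
  also have "\<dots> = (W*(B^2 + m*b) - e*B*(B + m))/(U*B^2)"
    using U0 W0 B0 unfolding a by (simp add: field_simps power2_eq_square)
  also have "\<dots> = y*(k*(B + m) + n*W - a*n)/(U*B)"
    using U0 B0 unfolding numerator a by (simp add: field_simps power2_eq_square)
  finally show ?thesis
    by (simp add: U_def W_def B_def k_def algebra_simps)
qed

lemma quadratic_double_root:
  fixes p q r :: "'a :: field_char_0"
  assumes "p \<noteq> 0" "q^2 = 4*p*r"
  shows "p * (- q/(2*p))^2 + q * (- q/(2*p)) + r = 0"
proof -
  have "r = q^2/(4*p)"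
    using assms by (simp add: field_simps)
  then show ?thesis
    using assms(1) by (simp add: field_simps power2_eq_square)
qed

lemma endemic_discriminant_eq_0:
  fixes a b e g m n s :: real
  assumes "n \<noteq> 0" and s: "s^2 = 4*m*(e*g + 1)*(n*e - b*(e*g + 1))"
    and a: "a = ((e*n - (b - m)*(e*g + 1)) + s)/n"
  shows "((b + m)*(e*g + 1) + n*(e - a))^2 = 4*((e*g + 1)*n)*(e*(b + m) - a*b)"
proof -
  have "a*n = e*n - (b - m)*(e*g + 1) + s"
    unfolding a using \<open>n \<noteq> 0\<close> by simp
  then show ?thesis
    using s by algebra
qed

lemma endemic_radicand_gt:
  fixes b e g m n :: real
  assumes "e*g + 1 > 0"
    and threshold: "n*(m*e) > (e*g + 1)*b^2 + m*(e*g + 1)*b"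
  shows "(2*b*(e*g + 1))^2 < 4*m*(e*g + 1)*(n*e - b*(e*g + 1))"
proof -
  define k where "k = e*g + 1"
  have "(2*b*k)^2 = 4*k*(k*b^2)"
    by (simp add: power2_eq_square)
  also have "\<dots> < 4*k*(m*(n*e - b*k))"
  proof -
    have "k*b^2 < m*(n*e - b*k)"
      using threshold by (simp add: k_def algebra_simps)
    then show ?thesis
      using assms(1) by (simp add: k_def)
  qed
  finally show ?thesis
    by (simp add: k_def ac_simps)
qed

lemma endemic_double_root_pos:
  fixes a b e g m n :: real
  assumes "n > 0" "e*g + 1 > 0"
    and radicand: "(2*b*(e*g + 1))^2 < 4*m*(e*g + 1)*(n*e - b*(e*g + 1))"
    and a: "a = ((e*n - (b - m)*(e*g + 1)) + sqrt (4*m*(e*g + 1)*(n*e - b*(e*g + 1))))/n"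
  shows "- ((b + m)*(e*g + 1) + n*(e - a)) / (2*((e*g + 1)*n)) > 0"
proof -
  define k s where "k = e*g + 1" and "s = sqrt (4*m*k*(n*e - b*k))"
  have "2*b*k < s"
    using radicand unfolding s_def k_def by (rule real_less_rsqrt)
  moreover have "- ((b + m)*k + n*(e - a)) = s - 2*b*k"
    using a \<open>n > 0\<close> by (simp add: s_def k_def field_simps)
  ultimately show ?thesis
    using assms(1,2) by (simp add: k_def[symmetric])
qed

theorem theorem2p2:
  fixes a b e g m n :: real
  assumes "a > 0" "b > 0" "g > 0" "m > 0" "n > 0" "0 < e" "e < 1"
    and "n > ((e*g + 1) * b^2 + m * (e*g + 1) * b) / (m * e)"
    and "a = ((e*n - (b - m) * (e*g + 1)) + sqrt (4 * m * (e*g + 1) * (n*e - b * (e*g + 1)))) / n"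
  shows "let a1 = (e*g + 1) * n;
             a2 = (b + m) * (e*g + 1) + n * (e - a);
             y3 = - a2 / (2 * a1);
             x3 = a * (1 + g * y3) / (e + (e*g + 1) * y3)
         in det (sir_jacobian a b e g m n x3 y3) = 0"
proof -
  define a1 a2 y3 where "a1 = (e*g + 1) * n" and "a2 = (b + m) * (e*g + 1) + n * (e - a)"
    and "y3 = - a2 / (2 * a1)"
  have k: "e*g + 1 > 0" and a1: "a1 > 0"
    using assms(3,5,6) by (simp_all add: a1_def add_pos_pos)
  have "n*(m*e) > (e*g + 1)*b^2 + m*(e*g + 1)*b"
    using assms(4,6,8) by (simp add: pos_divide_less_eq mult.commute)
  then have radicand: "(2*b*(e*g + 1))^2 < 4*m*(e*g + 1)*(n*e - b*(e*g + 1))"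
    using k by (rule endemic_radicand_gt[rotated])
  then have y3: "y3 > 0"
    unfolding y3_def a1_def a2_def using assms(5,9) k by (intro endemic_double_root_pos)
  have "4*m*(e*g + 1)*(n*e - b*(e*g + 1)) \<ge> 0"
    using radicand zero_le_power2[of "2*b*(e*g + 1)"] by linarith
  then have discriminant: "a2^2 = 4*a1*(e*(b + m) - a*b)"
    unfolding a1_def a2_def using assms(5)
    by (intro endemic_discriminant_eq_0[OF _ real_sqrt_pow2 assms(9)]) auto
  have "endemic_quadratic a b e g m n y3 = a1*y3^2 + a2*y3 + (e*(b + m) - a*b)"
    unfolding endemic_quadratic_expand a1_def a2_def ..
  also have "\<dots> = 0"
    unfolding y3_def using quadratic_double_root[OF _ discriminant] a1 by simp
  finally have root: "endemic_quadratic a b e g m n y3 = 0" .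
  have "1 + g*y3 > 0" "b + n*y3 > 0" "e + (e*g + 1)*y3 > 0"
    using y3 assms(2,3,5,6) by (simp_all add: add_pos_pos)
  then have "det (sir_jacobian a b e g m n (a*(1 + g*y3)/(e + (e*g + 1)*y3)) y3) =
      y3 * (2*a1*y3 + a2) / ((1 + g*y3) * (b + n*y3))"
    unfolding a1_def a2_def by (intro det_sir_jacobian_at_equilibrium[OF _ _ _ refl root]) auto
  also have "2*a1*y3 + a2 = 0"
    using a1 by (simp add: y3_def)
  finally show ?thesis
    unfolding Let_def a1_def[symmetric] a2_def[symmetric] y3_def[symmetric] by simp
qed

end
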